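(* Let $\mathscr C$ be a directed cycle with node set $\{1,\dots,l\}$, each node $i$ carrying an integer label ${\rm label}(i)$ (different nodes may share a label). For a node $a$ of $\mathscr C$, let $a^-$ denote its predecessor in $\mathscr C$ (the unique node with an edge $a^-\to a$). Consider a random process $(i_k,j_k)_{k\ge1}$ of pairs of nodes of $\mathscr C$, with history $W_k=(i_\tau,j_\tau)_{\tau=1}^k$, such that for some $\gamma>0$ and all $k$: if ${\rm label}(i_k)\ne{\rm label}(j_k)$, then $(i_{k+1},j_{k+1})\in\{i_k,i_k^-\}\times\{j_k,j_k^-\}$ almost surely and $\mathbb P((i_{k+1},j_{k+1})=(i_k,j_k^-)\mid W_k)\ge\gamma$, $\mathbb P((i_{k+1},j_{k+1})=(i_k^-,j_k)\mid W_k)\ge\gamma$, $\mathbb P((i_{k+1},j_{k+1})\in\{(i_k,j_k),(i_k^-,j_k^-)\}\mid W_k)\ge\gamma$; if ${\rm label}(i_k)={\rm label}(j_k)$, then $\mathbb P((i_{k+1},j_{k+1})=(i_k,j_k)\mid W_k)=1$. Then there exist an integer $k^*>0$ and numbers $\mu_k\in(0,1)$ such that for every initial pair $(i_1,j_1)$, $\mathbb P({\rm label}(i_{k+1})={\rm label}(j_{k+1})\mid i_1,j_1)\ge\mu_k$ for all $k\ge k^*$. *)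

theory Defs
  imports "HOL-Probability.Probability"
begin

text \<open>A directed cycle on the node set {1..l}, described by its predecessor map:
  pred a is the unique node with an edge pred a -> a.\<close>
definition directed_cycle_pred :: "nat \<Rightarrow> (nat \<Rightarrow> nat) \<Rightarrow> bool" where
  "directed_cycle_pred l pred \<longleftrightarrow>
     l \<ge> 1 \<and> bij_betw pred {1..l} {1..l} \<and>
     (\<forall>a\<in>{1..l}. \<forall>b\<in>{1..l}. \<exists>n. (pred ^^ n) a = b)"

definition hist :: "(nat \<Rightarrow> 'a \<Rightarrow> nat \<times> nat) \<Rightarrow> nat \<Rightarrow> 'a \<Rightarrow> (nat \<times> nat) list" where
  "hist X k \<omega> = map (\<lambda>\<tau>. X \<tau> \<omega>) [1..<Suc k]"

end

theory Submission
  imports Defs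
begin

text \<open>Follow the deterministic path that keeps i fixed and moves j one step back along the
  cycle until the labels agree, and then stays put.  Since iterating pred from j visits
  every node, this path reaches agreeing labels, and by finiteness it does so within a
  uniform number N of steps from every start.  Given the whole history, the process takes
  the next step of this path with probability at least c = min \<gamma> 1, so it follows the
  path for k steps with probability at least c^k; for k \<ge> N this forces agreeing labels,
  and \<mu>_k = c^k / 2 works (halving only makes \<mu>_k < 1).\<close>

lemma length_hist [simp]: "length (hist X k \<omega>) = k"
  by (simp add: hist_def)

lemma hist_Suc: "hist X (Suc k) \<omega> = hist X k \<omega> @ [X (Suc k) \<omega>]"
  by (simp add: hist_def)

lemma nth_hist: "\<tau> < k \<Longrightarrow> hist X k \<omega> ! \<tau> = X (Suc \<tau>) \<omega>"
  by (simp add: hist_def del: upt_Suc)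

definition iterates :: "('a \<Rightarrow> 'a) \<Rightarrow> 'a \<Rightarrow> nat \<Rightarrow> 'a list" where
  "iterates f x n = map (\<lambda>\<tau>. (f ^^ \<tau>) x) [0..<n]"

lemma length_iterates [simp]: "length (iterates f x n) = n"
  by (simp add: iterates_def)

lemma iterates_Suc: "iterates f x (Suc n) = iterates f x n @ [(f ^^ n) x]"
  by (simp add: iterates_def)

lemma nth_iterates: "\<tau> < n \<Longrightarrow> iterates f x n ! \<tau> = (f ^^ \<tau>) x"
  by (simp add: iterates_def del: upt_Suc)

lemma hist_Suc_eq_iterates_Suc_iff:
  "hist X (Suc (Suc n)) \<omega> = iterates f x (Suc (Suc n)) \<longleftrightarrow>
     hist X (Suc n) \<omega> = iterates f x (Suc n) \<and> X (Suc (Suc n)) \<omega> = f (last (iterates f x (Suc n)))"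
  by (simp only: hist_Suc[of X "Suc n"] iterates_Suc[of f x "Suc n"] append_eq_append_conv
      length_hist length_iterates) (simp add: iterates_Suc)

lemma joint_prob_ge_of_cond_prob_ge:
  assumes "\<P>(\<omega> in M. Q \<omega>) > 0 \<Longrightarrow> \<P>(\<omega> in M. P \<omega> \<bar> Q \<omega>) \<ge> c"
  shows "\<P>(\<omega> in M. P \<omega> \<and> Q \<omega>) \<ge> c * \<P>(\<omega> in M. Q \<omega>)"
proof (cases "\<P>(\<omega> in M. Q \<omega>) > 0")
  case True
  then show ?thesis
    using assms by (simp add: cond_prob_def le_divide_eq mult.commute)
next
  case False
  then have "\<P>(\<omega> in M. Q \<omega>) = 0"
    by (simp add: order.strict_iff_order)
  then show ?thesis by simp
qed

lemma prob_hist_eq_iterates_ge: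
  assumes "0 \<le> c"
    and follows: "\<And>k h. k \<ge> 1 \<Longrightarrow> \<P>(\<omega> in M. hist X k \<omega> = h) > 0 \<Longrightarrow>
           \<P>(\<omega> in M. X (Suc k) \<omega> = f (last h) \<bar> hist X k \<omega> = h) \<ge> c"
  shows "\<P>(\<omega> in M. hist X (Suc n) \<omega> = iterates f x (Suc n)) \<ge> c ^ n * \<P>(\<omega> in M. X 1 \<omega> = x)"
proof (induction n)
  case 0
  then show ?case
    by (simp add: hist_def iterates_def)
next
  case (Suc n)
  let ?h = "iterates f x (Suc n)"
  have "c ^ Suc n * \<P>(\<omega> in M. X 1 \<omega> = x) \<le> c * \<P>(\<omega> in M. hist X (Suc n) \<omega> = ?h)"
    using Suc.IH \<open>0 \<le> c\<close> by (simp add: mult.assoc mult_left_mono)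
  also have "\<dots> \<le> \<P>(\<omega> in M. X (Suc (Suc n)) \<omega> = f (last ?h) \<and> hist X (Suc n) \<omega> = ?h)"
    by (rule joint_prob_ge_of_cond_prob_ge) (simp add: follows)
  also have "\<dots> = \<P>(\<omega> in M. hist X (Suc (Suc n)) \<omega> = iterates f x (Suc (Suc n)))"
    by (simp add: hist_Suc_eq_iterates_Suc_iff conj_commute)
  finally show ?case .
qed

lemma cond_prob_ge_along_iterates:
  assumes "prob_space M" "0 \<le> c"
    and follows: "\<And>k h. k \<ge> 1 \<Longrightarrow> \<P>(\<omega> in M. hist X k \<omega> = h) > 0 \<Longrightarrow>
           \<P>(\<omega> in M. X (Suc k) \<omega> = f (last h) \<bar> hist X k \<omega> = h) \<ge> c"
    and [measurable]: "X 1 \<in> M \<rightarrow>\<^sub>M count_space UNIV" "X (Suc k) \<in> M \<rightarrow>\<^sub>M count_space UNIV"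
    and "P ((f ^^ k) x)" "\<P>(\<omega> in M. X 1 \<omega> = x) > 0"
  shows "\<P>(\<omega> in M. P (X (Suc k) \<omega>) \<bar> X 1 \<omega> = x) \<ge> c ^ k"
proof -
  interpret prob_space M by fact
  have "{\<omega>\<in>space M. hist X (Suc k) \<omega> = iterates f x (Suc k)}
      \<subseteq> {\<omega>\<in>space M. P (X (Suc k) \<omega>) \<and> X 1 \<omega> = x}"
  proof
    fix \<omega> assume "\<omega> \<in> {\<omega>\<in>space M. hist X (Suc k) \<omega> = iterates f x (Suc k)}"
    then have \<omega>: "\<omega> \<in> space M" "hist X (Suc k) \<omega> = iterates f x (Suc k)" by simp_all
    have "X (Suc \<tau>) \<omega> = (f ^^ \<tau>) x" if "\<tau> \<le> k" for \<tau>
      using nth_hist[of \<tau> "Suc k" X \<omega>] nth_iterates[of \<tau> "Suc k" f x] \<omega>(2) that by simp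
    from this[of 0] this[of k] show "\<omega> \<in> {\<omega>\<in>space M. P (X (Suc k) \<omega>) \<and> X 1 \<omega> = x}"
      using \<open>P ((f ^^ k) x)\<close> \<omega>(1) by simp
  qed
  then have "\<P>(\<omega> in M. hist X (Suc k) \<omega> = iterates f x (Suc k)) \<le> \<P>(\<omega> in M. P (X (Suc k) \<omega>) \<and> X 1 \<omega> = x)"
    by (intro finite_measure_mono) measurable
  moreover have "c ^ k * \<P>(\<omega> in M. X 1 \<omega> = x) \<le> \<P>(\<omega> in M. hist X (Suc k) \<omega> = iterates f x (Suc k))"
    using prob_hist_eq_iterates_ge[of c M X f] follows \<open>0 \<le> c\<close> by simp
  ultimately show ?thesis
    using \<open>\<P>(\<omega> in M. X 1 \<omega> = x) > 0\<close> by (simp add: cond_prob_def le_divide_eq)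
qed

definition same_label :: "('n \<Rightarrow> 'b) \<Rightarrow> 'n \<times> 'n \<Rightarrow> bool" where
  "same_label label q \<longleftrightarrow> label (fst q) = label (snd q)"

definition chase_step :: "('n \<Rightarrow> 'b) \<Rightarrow> ('n \<Rightarrow> 'n) \<Rightarrow> 'n \<times> 'n \<Rightarrow> 'n \<times> 'n" where
  "chase_step label pred q = (if same_label label q then q else (fst q, pred (snd q)))"

lemma same_label_chase_step_iterate_mono:
  assumes "same_label label ((chase_step label pred ^^ m) q)" "m \<le> n"
  shows "same_label label ((chase_step label pred ^^ n) q)"
  using assms(2,1) by (induction n rule: dec_induct) (simp_all add: chase_step_def)

lemma chase_step_iterate_cases:
  "same_label label ((chase_step label pred ^^ n) (i, j))
   \<or> (chase_step label pred ^^ n) (i, j) = (i, (pred ^^ n) j)"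
  by (induction n) (auto simp: chase_step_def)

lemma eventually_same_label_chase_step_iterate:
  assumes "directed_cycle_pred l pred"
  shows "\<forall>\<^sub>F n in sequentially. \<forall>q\<in>{1..l} \<times> {1..l}. same_label label ((chase_step label pred ^^ n) q)"
proof (rule eventually_ball_finite, simp, intro ballI)
  fix q assume "q \<in> {1..l} \<times> {1..l}"
  then obtain i j where q: "q = (i, j)" "i \<in> {1..l}" "j \<in> {1..l}" by auto
  then obtain m where "(pred ^^ m) j = i"
    using assms q(2,3) unfolding directed_cycle_pred_def by blast
  then have "same_label label ((chase_step label pred ^^ m) q)"
    using chase_step_iterate_cases[where label=label and pred=pred and n=m and i=i and j=j] q
    by (auto simp: same_label_def)
  then show "\<forall>\<^sub>F n in sequentially. same_label label ((chase_step label pred ^^ n) q)"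
    unfolding eventually_sequentially by (blast intro: same_label_chase_step_iterate_mono)
qed

theorem lemma5:
  fixes M :: "'a measure" and l :: nat and pred :: "nat \<Rightarrow> nat"
    and label :: "nat \<Rightarrow> int" and X :: "nat \<Rightarrow> 'a \<Rightarrow> nat \<times> nat" and \<gamma> :: real
  assumes "prob_space M"
    and "directed_cycle_pred l pred"
    and "\<And>k. k \<ge> 1 \<Longrightarrow> X k \<in> measurable M (count_space UNIV)"
    and "\<And>k \<omega>. k \<ge> 1 \<Longrightarrow> \<omega> \<in> space M \<Longrightarrow> X k \<omega> \<in> {1..l} \<times> {1..l}"
    and "\<gamma> > 0"
    and "\<And>k. k \<ge> 1 \<Longrightarrow> AE \<omega> in M. label (fst (X k \<omega>)) \<noteq> label (snd (X k \<omega>)) \<longrightarrow>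
            X (Suc k) \<omega> \<in> {fst (X k \<omega>), pred (fst (X k \<omega>))} \<times> {snd (X k \<omega>), pred (snd (X k \<omega>))}"
    and "\<And>k h i j. k \<ge> 1 \<Longrightarrow> \<P>(\<omega> in M. hist X k \<omega> = h) > 0 \<Longrightarrow> last h = (i, j) \<Longrightarrow>
            label i \<noteq> label j \<Longrightarrow>
            \<P>(\<omega> in M. X (Suc k) \<omega> = (i, pred j) \<bar> hist X k \<omega> = h) \<ge> \<gamma> \<and>
            \<P>(\<omega> in M. X (Suc k) \<omega> = (pred i, j) \<bar> hist X k \<omega> = h) \<ge> \<gamma> \<and>
            \<P>(\<omega> in M. X (Suc k) \<omega> \<in> {(i, j), (pred i, pred j)} \<bar> hist X k \<omega> = h) \<ge> \<gamma>"
    and "\<And>k h i j. k \<ge> 1 \<Longrightarrow> \<P>(\<omega> in M. hist X k \<omega> = h) > 0 \<Longrightarrow> last h = (i, j) \<Longrightarrow>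
            label i = label j \<Longrightarrow>
            \<P>(\<omega> in M. X (Suc k) \<omega> = (i, j) \<bar> hist X k \<omega> = h) = 1"
  shows "\<exists>kstar::nat. kstar > 0 \<and> (\<exists>\<mu>::nat \<Rightarrow> real. (\<forall>k\<ge>kstar. 0 < \<mu> k \<and> \<mu> k < 1) \<and>
           (\<forall>i1 j1 k. k \<ge> kstar \<longrightarrow> \<P>(\<omega> in M. X 1 \<omega> = (i1, j1)) > 0 \<longrightarrow>
              \<P>(\<omega> in M. label (fst (X (Suc k) \<omega>)) = label (snd (X (Suc k) \<omega>)) \<bar> X 1 \<omega> = (i1, j1))
                \<ge> \<mu> k))"
proof -
  let ?f = "chase_step label pred"
  define c where "c = min \<gamma> 1"
  have c: "0 < c" "c \<le> 1" "c \<le> \<gamma>"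
    using \<open>\<gamma> > 0\<close> by (auto simp: c_def)
  obtain N where N: "\<And>n q. n \<ge> N \<Longrightarrow> q \<in> {1..l} \<times> {1..l} \<Longrightarrow> same_label label ((?f ^^ n) q)"
    using eventually_same_label_chase_step_iterate[OF assms(2), of label]
    unfolding eventually_sequentially by blast
  have follows: "\<P>(\<omega> in M. X (Suc k) \<omega> = ?f (last h) \<bar> hist X k \<omega> = h) \<ge> c"
    if "k \<ge> 1" "\<P>(\<omega> in M. hist X k \<omega> = h) > 0" for k h
  proof -
    obtain i j where ij: "last h = (i, j)" by fastforce
    show ?thesis
    proof (cases "label i = label j")
      case True
      then show ?thesis using assms(8)[OF that ij] ij c by (simp add: chase_step_def same_label_def)
    next
      case False
      then show ?thesis using assms(7)[OF that ij] ij c by (simp add: chase_step_def same_label_def)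
    qed
  qed
  show ?thesis
  proof (intro exI conjI allI impI)
    show "0 < Suc N" "0 < c ^ k / 2" "c ^ k / 2 < 1" for k
      using c power_le_one[of c k] by auto
    fix i1 j1 k
    assume "Suc N \<le> k" and pos: "\<P>(\<omega> in M. X 1 \<omega> = (i1, j1)) > 0"
    then obtain \<omega> where "\<omega> \<in> space M" "X 1 \<omega> = (i1, j1)"
      by (metis (mono_tags, lifting) Collect_empty_eq less_irrefl measure_empty)
    then have "(i1, j1) \<in> {1..l} \<times> {1..l}"
      using assms(4)[of 1 \<omega>] by simp
    then have "same_label label ((?f ^^ k) (i1, j1))"
      using N \<open>Suc N \<le> k\<close> by simp
    then have "c ^ k \<le> \<P>(\<omega> in M. same_label label (X (Suc k) \<omega>) \<bar> X 1 \<omega> = (i1, j1))"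
      using c assms(3)[of 1] assms(3)[of "Suc k"]
      by (intro cond_prob_ge_along_iterates[OF assms(1) _ follows] pos) auto
    moreover have "0 \<le> c ^ k"
      using c by simp
    ultimately show "c ^ k / 2 \<le> \<P>(\<omega> in M. label (fst (X (Suc k) \<omega>)) = label (snd (X (Suc k) \<omega>)) \<bar> X 1 \<omega> = (i1, j1))"
      unfolding same_label_def by linarith
  qed
qed

end
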